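(* Let $d\ge1$, $D=\{1,\dots,d\}$, let $\Pi=(\Pi_{ij})_{i,j\in D}$ be a $d\times d$ stochastic matrix, and let $\mathcal{E}_H:\mathcal{M}_d\otimes\mathcal{M}_d\to\mathcal{M}_d$ be the linear extension of $\mathcal{E}_H(a\otimes b)=a\diamond P_H(b)$. Let $n\in\mathbb{N}$, $r\ge 0$ and $a_m=(a^{(m)}_{kl})_{k,l\in D}\in\mathcal{M}_d$ for $n\le m\le n+r$. Then $$\mathcal{E}_H\big(a_n\otimes\mathcal{E}_H(a_{n+1}\otimes\cdots\otimes\mathcal{E}_H(a_{n+r}\otimes \mathbf{1}_d)\cdots)\big)$$ $$=\sum_{\substack{k_n,\dots,k_{n+r}\in D\\ l_n,\dots,l_{n+r}\in D}}\Big(\prod_{m=n}^{n+r-1}\sqrt{\Pi_{k_mk_{m+1}}\Pi_{l_ml_{m+1}}}\,a^{(m)}_{k_ml_m}\Big)\Big(a^{(n+r)}_{k_{n+r}l_{n+r}}\sum_{j\in D}\sqrt{\Pi_{k_{n+r}j}\Pi_{l_{n+r}j}}\Big)e_{k_nl_n}.$$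
   Context: $\mathcal{M}_d$ is the algebra of complex $d\times d$ matrices with identity $\mathbf{1}_d$ and matrix units $e_{ij}$. A stochastic matrix has nonnegative entries and row sums $1$. $P_H:\mathcal{M}_d\to\mathcal{M}_d$ is defined by $P_H(A)=\sum_{i,j,k,l\in D}\sqrt{\Pi_{ik}\Pi_{jl}}\,a_{kl}\,e_{ij}$ for $A=(a_{kl})$, and $\diamond$ denotes the Schur (entrywise) product of matrices. *)

theory Defs
  imports "HOL-Analysis.Analysis"
begin

text \<open>Index set D is modelled by a finite type 'd; matrices in M_d are complex^'d^'d.\<close>

definition stochastic :: "real^'d^'d \<Rightarrow> bool" where
  "stochastic P \<longleftrightarrow> (\<forall>i j. P$i$j \<ge> 0) \<and> (\<forall>i. (\<Sum>j\<in>UNIV. P$i$j) = 1)"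

definition one_mat :: "complex^'d^'d" where
  "one_mat = (\<chi> i j. if i = j then 1 else 0)"

definition mat_unit :: "'d \<Rightarrow> 'd \<Rightarrow> complex^'d^'d" where
  "mat_unit k l = (\<chi> i j. if i = k \<and> j = l then 1 else 0)"

definition mat_smult :: "complex \<Rightarrow> complex^'d^'d \<Rightarrow> complex^'d^'d" where
  "mat_smult c A = (\<chi> i j. c * A$i$j)"

definition schur :: "complex^'d^'d \<Rightarrow> complex^'d^'d \<Rightarrow> complex^'d^'d" where
  "schur A B = (\<chi> i j. A$i$j * B$i$j)"

definition P_H :: "real^'d^'d \<Rightarrow> complex^'d^'d \<Rightarrow> complex^'d^'d" where
  "P_H P A = (\<chi> i j. \<Sum>k\<in>UNIV. \<Sum>l\<in>UNIV.
      complex_of_real (sqrt (P$i$k * P$j$l)) * A$k$l)"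

definition E_H :: "real^'d^'d \<Rightarrow> complex^'d^'d \<Rightarrow> complex^'d^'d \<Rightarrow> complex^'d^'d" where
  "E_H P a b = schur a (P_H P b)"

fun nested :: "real^'d^'d \<Rightarrow> (nat \<Rightarrow> complex^'d^'d) \<Rightarrow> nat \<Rightarrow> nat \<Rightarrow> complex^'d^'d" where
  "nested P a n 0 = E_H P (a n) one_mat"
| "nested P a n (Suc r) = E_H P (a n) (nested P a (Suc n) r)"

end

theory Submission
  imports Defs
begin

text \<open>Entry (i, j) of E_H(a \<otimes> B) is a_ij times the sum over p, q of sqrt(\<Pi>_ip \<Pi>_jq) B_pq.
  Unfolding the nested expression one layer at a time therefore yields a sum over pairs of
  index paths k, l on {n..n+r} starting at (i, j), where every step m contributes
  sqrt(\<Pi>(k_m, k_m+1) \<Pi>(l_m, l_m+1)) a_m(k_m, l_m), and the innermost factor 1_d collapses the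
  last double sum to its diagonal.\<close>

lemma sum_PiE_insert:
  assumes "x \<notin> S"
  shows "(\<Sum>k\<in>Pi\<^sub>E (insert x S) T. h k) = (\<Sum>y\<in>T x. \<Sum>k\<in>Pi\<^sub>E S T. h (k(x := y)))"
proof -
  have "(\<Sum>k\<in>Pi\<^sub>E (insert x S) T. h k) = (\<Sum>(y, k)\<in>T x \<times> Pi\<^sub>E S T. h (k(x := y)))"
    unfolding PiE_insert_eq
    by (subst sum.reindex[OF inj_combinator[OF assms]]) (simp add: case_prod_unfold)
  then show ?thesis
    by (simp add: sum.cartesian_product)
qed

lemma sum_PiE_insert2:
  assumes "x \<notin> S"
  shows "(\<Sum>k\<in>Pi\<^sub>E (insert x S) T. \<Sum>l\<in>Pi\<^sub>E (insert x S) T. h k l)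
       = (\<Sum>p\<in>T x. \<Sum>q\<in>T x. \<Sum>k\<in>Pi\<^sub>E S T. \<Sum>l\<in>Pi\<^sub>E S T. h (k(x := p)) (l(x := q)))"
  by (simp add: sum_PiE_insert[OF assms] sum.swap[where A = "Pi\<^sub>E S T" and B = "T x"])

lemma sum_PiE_insert_pinned:
  assumes "x \<notin> S" "finite (T x)" "i \<in> T x"
  shows "(\<Sum>k\<in>Pi\<^sub>E (insert x S) T. if k x = i then h k else 0) = (\<Sum>k\<in>Pi\<^sub>E S T. h (k(x := i)))"
proof -
  have "(\<Sum>k\<in>Pi\<^sub>E (insert x S) T. if k x = i then h k else 0)
      = (\<Sum>y\<in>T x. if y = i then \<Sum>k\<in>Pi\<^sub>E S T. h (k(x := y)) else 0)"
    unfolding sum_PiE_insert[OF assms(1)] by (intro sum.cong refl) simp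
  also have "\<dots> = (\<Sum>k\<in>Pi\<^sub>E S T. h (k(x := i)))"
    using assms(2,3) by simp
  finally show ?thesis .
qed

lemma mat_smult_mat_unit_entry:
  "mat_smult c (mat_unit p q) $ i $ j = (if p = i \<and> q = j then c else 0)"
  by (auto simp: mat_smult_def mat_unit_def)

lemma E_H_entry:
  "E_H P a b $ i $ j
     = a $ i $ j * (\<Sum>p\<in>UNIV. \<Sum>q\<in>UNIV. complex_of_real (sqrt (P$i$p * P$j$q)) * b $ p $ q)"
  by (simp add: E_H_def schur_def P_H_def)

lemma P_H_one_mat_entry:
  "P_H P one_mat $ i $ j = (\<Sum>p\<in>UNIV. complex_of_real (sqrt (P$i$p * P$j$p)))"
  by (simp add: P_H_def one_mat_def if_distrib cong: if_cong)

definition path_weight ::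
    "real^'d^'d \<Rightarrow> (nat \<Rightarrow> complex^'d^'d) \<Rightarrow> nat \<Rightarrow> nat \<Rightarrow> (nat \<Rightarrow> 'd) \<Rightarrow> (nat \<Rightarrow> 'd) \<Rightarrow> complex"
  where
  "path_weight P a n r k l =
     (\<Prod>m=n..<n+r. complex_of_real (sqrt (P$(k m)$(k (m+1)) * P$(l m)$(l (m+1)))) * a m $ (k m) $ (l m))
     * (a (n+r) $ (k (n+r)) $ (l (n+r))
        * (\<Sum>j\<in>UNIV. complex_of_real (sqrt (P$(k (n+r))$j * P$(l (n+r))$j))))"

lemma path_weight_0:
  "path_weight P a n 0 k l
     = a n $ (k n) $ (l n) * (\<Sum>j\<in>UNIV. complex_of_real (sqrt (P$(k n)$j * P$(l n)$j)))"
  by (simp add: path_weight_def)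

lemma path_weight_Suc:
  "path_weight P a n (Suc r) (k(n := i)) (l(n := j))
     = a n $ i $ j * complex_of_real (sqrt (P$i$(k (Suc n)) * P$j$(l (Suc n))))
       * path_weight P a (Suc n) r k l"
proof -
  have split: "{n..<n + Suc r} = insert n {Suc n..<Suc n + r}"
    by auto
  have "(\<Prod>m=Suc n..<Suc n+r. complex_of_real (sqrt (P$((k(n:=i)) m)$((k(n:=i)) (m+1))
            * P$((l(n:=j)) m)$((l(n:=j)) (m+1)))) * a m $ ((k(n:=i)) m) $ ((l(n:=j)) m))
      = (\<Prod>m=Suc n..<Suc n+r. complex_of_real (sqrt (P$(k m)$(k (m+1)) * P$(l m)$(l (m+1))))
            * a m $ (k m) $ (l m))"
    by (intro prod.cong) auto
  then show ?thesis
    unfolding path_weight_def split by (simp add: algebra_simps del: prod.op_ivl_Suc)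
qed

lemma nested_entry:
  "nested P a n r $ i $ j
     = (\<Sum>k\<in>{Suc n..n+r} \<rightarrow>\<^sub>E UNIV. \<Sum>l\<in>{Suc n..n+r} \<rightarrow>\<^sub>E UNIV.
          path_weight P a n r (k(n := i)) (l(n := j)))"
proof (induction r arbitrary: n i j)
  case 0
  show ?case
    by (simp add: E_H_def schur_def P_H_one_mat_entry path_weight_0)
next
  case (Suc r)
  let ?w = "\<lambda>p q. complex_of_real (sqrt (P$i$p * P$j$q))"
  let ?S = "{Suc (Suc n)..Suc n + r} \<rightarrow>\<^sub>E (UNIV :: 'd set)"
  have paths: "{Suc n..n + Suc r} = insert (Suc n) {Suc (Suc n)..Suc n + r}"
    by auto
  have fresh: "Suc n \<notin> {Suc (Suc n)..Suc n + r}"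
    by simp
  have "nested P a n (Suc r) $ i $ j
      = a n $ i $ j * (\<Sum>p\<in>UNIV. \<Sum>q\<in>UNIV. ?w p q * (\<Sum>k\<in>?S. \<Sum>l\<in>?S.
          path_weight P a (Suc n) r (k(Suc n := p)) (l(Suc n := q))))"
    by (simp only: nested.simps E_H_entry Suc.IH)
  also have "\<dots> = (\<Sum>k\<in>{Suc n..n + Suc r} \<rightarrow>\<^sub>E UNIV. \<Sum>l\<in>{Suc n..n + Suc r} \<rightarrow>\<^sub>E UNIV.
          a n $ i $ j * ?w (k (Suc n)) (l (Suc n)) * path_weight P a (Suc n) r k l)"
    unfolding paths sum_PiE_insert2[OF fresh]
    by (simp add: sum_distrib_left mult.assoc)
  also have "\<dots> = (\<Sum>k\<in>{Suc n..n + Suc r} \<rightarrow>\<^sub>E UNIV. \<Sum>l\<in>{Suc n..n + Suc r} \<rightarrow>\<^sub>E UNIV.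
          path_weight P a n (Suc r) (k(n := i)) (l(n := j)))"
    by (simp only: path_weight_Suc)
  finally show ?case .
qed

theorem mainTheorem2:
  fixes P :: "real^'d^'d" and a :: "nat \<Rightarrow> complex^'d^'d" and n r :: nat
  assumes "stochastic P"
  shows "nested P a n r =
    (\<Sum>k\<in>{n..n+r} \<rightarrow>\<^sub>E (UNIV::'d set). \<Sum>l\<in>{n..n+r} \<rightarrow>\<^sub>E (UNIV::'d set).
       mat_smult
         ((\<Prod>m=n..<n+r. complex_of_real (sqrt (P$(k m)$(k (m+1)) * P$(l m)$(l (m+1)))) * a m $ (k m) $ (l m))
          * (a (n+r) $ (k (n+r)) $ (l (n+r))
             * (\<Sum>j\<in>UNIV. complex_of_real (sqrt (P$(k (n+r))$j * P$(l (n+r))$j)))))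
         (mat_unit (k n) (l n)))"
    (is "_ = ?expansion")
proof -
  have paths: "{n..n+r} = insert n {Suc n..n+r}"
    by auto
  have fresh: "n \<notin> {Suc n..n+r}"
    by simp
  have "?expansion $ i $ j = nested P a n r $ i $ j" for i j
  proof -
    have "?expansion $ i $ j = (\<Sum>k\<in>{n..n+r} \<rightarrow>\<^sub>E UNIV. \<Sum>l\<in>{n..n+r} \<rightarrow>\<^sub>E UNIV.
        if k n = i \<and> l n = j then path_weight P a n r k l else 0)"
      by (simp only: sum_component mat_smult_mat_unit_entry path_weight_def)
    also have "\<dots> = (\<Sum>k\<in>{n..n+r} \<rightarrow>\<^sub>E UNIV. if k n = i then \<Sum>l\<in>{n..n+r} \<rightarrow>\<^sub>E UNIV.
        if l n = j then path_weight P a n r k l else 0 else 0)"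
      by (intro sum.cong refl) simp
    also have "\<dots> = (\<Sum>k\<in>{Suc n..n+r} \<rightarrow>\<^sub>E UNIV. \<Sum>l\<in>{Suc n..n+r} \<rightarrow>\<^sub>E UNIV.
        path_weight P a n r (k(n := i)) (l(n := j)))"
      unfolding paths by (simp add: sum_PiE_insert_pinned[OF fresh])
    also have "\<dots> = nested P a n r $ i $ j"
      by (rule nested_entry[symmetric])
    finally show ?thesis .
  qed
  then show ?thesis
    by (simp add: vec_eq_iff)
qed

end
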